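(* Let $n\in\mathbb{N}_{\geq1}\cup\{\infty\}$ and integers $h,r\geq1$ with $h+r\leq n$. Let ${\bf z}_h=(z_1,\ldots,z_h)$ and ${\bf t}_r=(t_1,\ldots,t_r)$ be indeterminates. Then in $\bigwedge^{h+r}V_n[[{\bf z}_h,{\bf t}_r]]$, $$\sigma_+({\bf z}_h)\mathbf{X}^h(0)\wedge\sigma_+({\bf t}_r)\mathbf{X}^r(0)=\prod_{i=1}^h\prod_{j=1}^r(z_i-t_j)\;\sigma_+({\bf z}_h,{\bf t}_r)\mathbf{X}^{h+r}(0),$$ where $\sigma_+({\bf z}_h,{\bf t}_r)=\sigma_+(z_1)\cdots\sigma_+(z_h)\sigma_+(t_1)\cdots\sigma_+(t_r)$.
   Context: For $n$ finite, $V_n=\mathbb{Q}[X]/(X^n)$ with basis $X^0,\ldots,X^{n-1}$; $V_\infty=\mathbb{Q}[X]$. $\mathbf{X}^m(0)=X^{m-1}\wedge\cdots\wedge X^0$. For an endomorphism $A$ of $V_n$, $\mathrm{tr}(A)$ is the derivation of $(\bigwedge V_n,\wedge)$ extending $A$; $X$ denotes multiplication by $X$; $\sigma_+(z)=\exp(\sum_{j\geq1}\mathrm{tr}(X^j)z^j/j)$, a $\wedge$-algebra endomorphism with $\sigma_+(z)X^i=\sum_{k\geq0}X^{i+k}z^k$; $\sigma_+({\bf z}_h)=\sigma_+(z_1)\cdots\sigma_+(z_h)$ and similarly for ${\bf t}_r$. *)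

theory Defs
  imports Main "HOL-Library.Poly_Mapping" "HOL-Library.Groups_Big_Fun" "HOL-Library.Extended_Nat"
begin

text \<open>An element of the exterior algebra of V_n with coefficients in the formal power
  series ring Q[[x_0, x_1, ...]] is encoded by its coefficient function:
  F mu S is the coefficient of the monomial x^mu times the basis element X^S, where for a
  finite set S = {s_1 > ... > s_k} we write X^S = X^{s_1} wedge ... wedge X^{s_k}.
  Only finite S contained in {m. m < n} are ever used.\<close>

type_synonym ser = "(nat \<Rightarrow>\<^sub>0 nat) \<Rightarrow> nat set \<Rightarrow> rat"

text \<open>Sign of X^S wedge X^T relative to X^(S union T), for disjoint S, T.\<close>
definition wsign :: "nat set \<Rightarrow> nat set \<Rightarrow> rat" where
  "wsign S T = (-1) ^ card {(a, b). a \<in> S \<and> b \<in> T \<and> a < b}"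

definition wedge :: "ser \<Rightarrow> ser \<Rightarrow> ser" where
  "wedge A B mu U = (if finite U then
      (\<Sum>(\<alpha>, \<beta>) \<in> {(\<alpha>, \<beta>). \<alpha> + \<beta> = mu}. \<Sum>S \<in> Pow U. wsign S (U - S) * A \<alpha> S * B \<beta> (U - S))
    else 0)"

definition wunit :: ser where
  "wunit mu U = (if mu = 0 \<and> U = {} then 1 else 0)"

fun wedge_list :: "ser list \<Rightarrow> ser" where
  "wedge_list [] = wunit"
| "wedge_list (A # As) = wedge A (wedge_list As)"

definition mono :: "(nat \<Rightarrow>\<^sub>0 nat) \<Rightarrow> ser" where
  "mono \<alpha> mu U = (if mu = \<alpha> \<and> U = {} then 1 else 0)"

definition var :: "nat \<Rightarrow> ser" where
  "var v = mono (Poly_Mapping.single v 1)"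

definition ssub :: "ser \<Rightarrow> ser \<Rightarrow> ser" where
  "ssub A B mu U = A mu U - B mu U"

definition gen :: "enat \<Rightarrow> nat \<Rightarrow> ser" where
  "gen n m mu U = (if mu = 0 \<and> U = {m} \<and> enat m < n then 1 else 0)"

text \<open>X^k(0) = X^(k-1) wedge ... wedge X^0.\<close>
definition Xvac :: "enat \<Rightarrow> nat \<Rightarrow> ser" where
  "Xvac n k = wedge_list (map (gen n) (rev [0..<k]))"

text \<open>sigma_+(x_v) X^i = sum_k X^(i+k) x_v^k in V_n[[x]].\<close>
definition sigma1 :: "enat \<Rightarrow> nat \<Rightarrow> nat \<Rightarrow> ser" where
  "sigma1 n v i mu U = (if \<exists>m. U = {m} \<and> enat m < n \<and> i \<le> m \<and> mu = Poly_Mapping.single v (m - i)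
                        then 1 else 0)"

text \<open>sigma_+(x_v) as the Q[[x]]-linear wedge-algebra endomorphism determined by sigma1:
  sigma(x^alpha X^{s_1} wedge ... wedge X^{s_k}) = x^alpha sigma(X^{s_1}) wedge ... wedge sigma(X^{s_k}).
  Each coefficient of the result is a finite sum (Sum_any sums over the finite support).\<close>
definition sigma :: "enat \<Rightarrow> nat \<Rightarrow> ser \<Rightarrow> ser" where
  "sigma n v F mu U = Sum_any (\<lambda>(\<alpha>, S). if finite S then
      F \<alpha> S * wedge (mono \<alpha>) (wedge_list (map (sigma1 n v) (rev (sorted_list_of_set S)))) mu U
    else 0)"

definition sigmas :: "enat \<Rightarrow> nat list \<Rightarrow> ser \<Rightarrow> ser" where
  "sigmas n vs F = foldr (sigma n) vs F"

end

theory Submission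
  imports Defs "HOL-Library.Function_Algebras" "HOL-Library.FuncSet"
begin

text \<open>Write u k = sigma_+(z, t) X^k. Since sigma_+(t) X^k - t sigma_+(t) X^(k+1) = X^k, the
  difference operator D_t u k = u k - t u (k+1) undoes sigma_+(t); as the shifts commute,
  D_(t_1) ... D_(t_r) turns u into sigma_+(z) X^k and D_(z_1) ... D_(z_h) turns it into sigma_+(t) X^k.
  The theorem thus becomes an identity valid for any sequence of vectors u and scalars z_i, t_j:
  the wedge of D_t u (h-1), ..., D_t u 0 with D_z u (r-1), ..., D_z u 0 equals
  prod (z_i - t_j) u (h+r-1) wedge ... wedge u 0. It follows by induction on h, because
  D_t u h is congruent to prod_j (z_1 - t_j) u (h+r) modulo D_(z_1) u h, ..., D_(z_1) u (h+r-1),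
  and because subtracting multiples of neighbouring factors does not change a wedge product.\<close>

definition lower_monos :: "(nat \<Rightarrow>\<^sub>0 nat) \<Rightarrow> (nat \<Rightarrow>\<^sub>0 nat) set" where
  "lower_monos mu = {a. \<exists>b. a + b = mu}"

lemma lower_monos_diff_iff: "\<beta> \<in> lower_monos mu \<and> mu - \<beta> = \<gamma> \<longleftrightarrow> mu = \<beta> + \<gamma>"
  by (auto simp: lower_monos_def)

lemma lower_monos_iff: "a \<in> lower_monos mu \<longleftrightarrow> a + (mu - a) = mu"
  using lower_monos_diff_iff by metis

lemma lower_monos_compl: "a \<in> lower_monos mu \<Longrightarrow> mu - a \<in> lower_monos mu \<and> mu - (mu - a) = a"
  by (metis add.commute lower_monos_diff_iff)

lemma zero_in_lower_monos: "0 \<in> lower_monos mu" by (simp add: lower_monos_def)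

lemma finite_lower_monos: "finite (lower_monos mu)"
proof -
  let ?f = "\<lambda>a::nat \<Rightarrow>\<^sub>0 nat. restrict (Poly_Mapping.lookup a) (Poly_Mapping.keys mu)"
  have le: "Poly_Mapping.lookup a k \<le> Poly_Mapping.lookup mu k" if "a \<in> lower_monos mu" for a k
    using that by (auto simp: lower_monos_def lookup_add)
  then have "?f a = ?f b \<Longrightarrow> a = b" if "a \<in> lower_monos mu" "b \<in> lower_monos mu" for a b
    using that by (metis (mono_tags) in_keys_iff le_zero_eq poly_mapping_eqI restrict_apply')
  then have "inj_on ?f (lower_monos mu)" by (rule inj_onI)
  moreover have "?f ` lower_monos mu \<subseteq> PiE (Poly_Mapping.keys mu) (\<lambda>k. {..Poly_Mapping.lookup mu k})"
    using le by (auto simp: PiE_iff)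
  then have "finite (?f ` lower_monos mu)"
    by (rule finite_subset) (simp add: finite_PiE)
  ultimately show ?thesis by (metis finite_imageD)
qed

lemma add_eq_pairs_eq_image: "{(a, b). a + b = mu} = (\<lambda>a. (a, mu - a)) ` lower_monos mu"
  by (auto simp: lower_monos_def image_iff)

lemma diff_diff_eq_iff_lower_monos: "mu - (mu - b) = b \<longleftrightarrow> b \<in> lower_monos mu"
proof
  assume "mu - (mu - b) = b"
  then have "Poly_Mapping.lookup b k \<le> Poly_Mapping.lookup mu k" for k
    by (metis diff_le_self lookup_minus)
  then have "b + (mu - b) = mu" by (intro poly_mapping_eqI) (simp add: lookup_add lookup_minus)
  then show "b \<in> lower_monos mu" by (simp add: lower_monos_iff)
qed (metis lower_monos_compl)

lemma diff_in_lower_monos: "mu - b \<in> lower_monos mu"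
proof -
  have "(mu - b) + (mu - (mu - b)) = mu"
    by (intro poly_mapping_eqI) (simp add: lookup_add lookup_minus)
  then show ?thesis unfolding lower_monos_def by blast
qed

section \<open>Operators determined by their values on basis elements\<close>

definition basis :: "(nat \<Rightarrow>\<^sub>0 nat) \<Rightarrow> nat set \<Rightarrow> ser" where
  "basis a S = (\<lambda>mu U. if mu = a \<and> U = S then 1 else 0)"

definition scale :: "rat \<Rightarrow> ser \<Rightarrow> ser" where
  "scale k F = (\<lambda>mu U. k * F mu U)"

lemma scale_zero[simp]: "scale k 0 = 0" by (simp add: scale_def zero_fun_def)

lemma scale_scale[simp]: "scale k (scale l X) = scale (k * l) X" by (simp add: scale_def mult.assoc)

lemma scale_one[simp]: "scale 1 X = X" by (simp add: scale_def)

lemma uminus_scale: "- scale k X = scale (- k) X" by (simp add: scale_def fun_eq_iff)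

lemma lambda_zero[simp]: "(\<lambda>a b. 0::rat) = (0::ser)" by (simp add: fun_eq_iff)

lemma lambda_diff[simp]: "(\<lambda>a b. (A::ser) a b - B a b) = A - B" by (simp add: fun_eq_iff)

text \<open>A series has infinitely many coefficients, so linearity alone does not determine an operator
  by its values on basis elements. The operators below are linear in the stronger sense that
  every coefficient of the image depends on finitely many coefficients of the argument.\<close>

definition flinear :: "(ser \<Rightarrow> ser) \<Rightarrow> bool" where
  "flinear L \<longleftrightarrow> (\<forall>mu U. \<exists>Q. finite Q \<and>
     (\<forall>F. L F mu U = (\<Sum>q\<in>Q. F (fst q) (snd q) * L (basis (fst q) (snd q)) mu U)))"

lemma flinearI:
  assumes "\<And>mu U. \<exists>Q. finite Q \<and>
     (\<forall>F. L F mu U = (\<Sum>q\<in>Q. F (fst q) (snd q) * L (basis (fst q) (snd q)) mu U))"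
  shows "flinear L"
  using assms unfolding flinear_def by blast

lemma flinear_expand:
  assumes "flinear L"
  obtains Q where "finite Q" "\<And>F. L F mu U = (\<Sum>q\<in>Q. F (fst q) (snd q) * L (basis (fst q) (snd q)) mu U)"
  using assms unfolding flinear_def by blast

lemma flinear_expand_superset:
  assumes "flinear L"
  obtains Q where "finite Q" "\<And>Q' F. finite Q' \<Longrightarrow> Q \<subseteq> Q' \<Longrightarrow>
     L F mu U = (\<Sum>q\<in>Q'. F (fst q) (snd q) * L (basis (fst q) (snd q)) mu U)"
proof -
  obtain Q where Q: "finite Q" "\<And>F. L F mu U = (\<Sum>q\<in>Q. F (fst q) (snd q) * L (basis (fst q) (snd q)) mu U)"
    using flinear_expand[OF assms] by blast
  have outside: "L (basis (fst q) (snd q)) mu U = 0" if "q \<notin> Q" for q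
    using Q(2)[of "basis (fst q) (snd q)"] that
    by (auto simp: basis_def prod_eq_iff intro!: sum.neutral)
  show ?thesis
  proof (rule that[OF Q(1)])
    fix Q' F assume "finite Q'" "Q \<subseteq> Q'"
    then show "L F mu U = (\<Sum>q\<in>Q'. F (fst q) (snd q) * L (basis (fst q) (snd q)) mu U)"
      unfolding Q(2)[of F] by (intro sum.mono_neutral_left) (auto simp: outside)
  qed
qed

lemma flinear_eqI:
  assumes "flinear L" "flinear M" "\<And>a S. L (basis a S) = M (basis a S)"
  shows "L F = M F"
proof (intro ext)
  fix mu U
  obtain Q1 where Q1: "finite Q1" "\<And>Q' F. finite Q' \<Longrightarrow> Q1 \<subseteq> Q' \<Longrightarrow>
     L F mu U = (\<Sum>q\<in>Q'. F (fst q) (snd q) * L (basis (fst q) (snd q)) mu U)"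
    by (rule flinear_expand_superset[OF assms(1)]) blast
  obtain Q2 where Q2: "finite Q2" "\<And>Q' F. finite Q' \<Longrightarrow> Q2 \<subseteq> Q' \<Longrightarrow>
     M F mu U = (\<Sum>q\<in>Q'. F (fst q) (snd q) * M (basis (fst q) (snd q)) mu U)"
    by (rule flinear_expand_superset[OF assms(2)]) blast
  show "L F mu U = M F mu U"
    using Q1(2)[of "Q1 \<union> Q2" F] Q2(2)[of "Q1 \<union> Q2" F] Q1(1) Q2(1) assms(3) by simp
qed

lemma flinear_expand_superset_uniform:
  assumes "flinear M" "finite P"
  obtains Q where "finite Q" "\<And>p Q' F. p \<in> P \<Longrightarrow> finite Q' \<Longrightarrow> Q \<subseteq> Q' \<Longrightarrow>
     M F (fst p) (snd p) = (\<Sum>q\<in>Q'. F (fst q) (snd q) * M (basis (fst q) (snd q)) (fst p) (snd p))"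
proof -
  have "\<forall>p. \<exists>Q. finite Q \<and> (\<forall>Q' F. finite Q' \<longrightarrow> Q \<subseteq> Q' \<longrightarrow>
     M F (fst p) (snd p) = (\<Sum>q\<in>Q'. F (fst q) (snd q) * M (basis (fst q) (snd q)) (fst p) (snd p)))"
  proof
    fix p
    obtain Q where "finite Q" "\<And>Q' F. finite Q' \<Longrightarrow> Q \<subseteq> Q' \<Longrightarrow>
      M F (fst p) (snd p) = (\<Sum>q\<in>Q'. F (fst q) (snd q) * M (basis (fst q) (snd q)) (fst p) (snd p))"
      by (rule flinear_expand_superset[OF assms(1)]) blast
    then show "\<exists>Q. finite Q \<and> (\<forall>Q' F. finite Q' \<longrightarrow> Q \<subseteq> Q' \<longrightarrow>
      M F (fst p) (snd p) = (\<Sum>q\<in>Q'. F (fst q) (snd q) * M (basis (fst q) (snd q)) (fst p) (snd p)))"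
      by blast
  qed
  then obtain QM where QM: "\<forall>p. finite (QM p) \<and> (\<forall>Q' F. finite Q' \<longrightarrow> QM p \<subseteq> Q' \<longrightarrow>
     M F (fst p) (snd p) = (\<Sum>q\<in>Q'. F (fst q) (snd q) * M (basis (fst q) (snd q)) (fst p) (snd p)))"
    by (metis (no_types) choice)
  show ?thesis
  proof (rule that[of "\<Union>p\<in>P. QM p"])
    show "finite (\<Union>p\<in>P. QM p)" using assms(2) QM by blast
  qed (use QM in blast)
qed

lemma flinear_comp:
  assumes "flinear L" "flinear M"
  shows "flinear (\<lambda>F. L (M F))"
proof (rule flinearI)
  fix mu U
  obtain P where "finite P"
    and P: "\<And>F. L F mu U = (\<Sum>p\<in>P. F (fst p) (snd p) * L (basis (fst p) (snd p)) mu U)"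
    using flinear_expand[OF assms(1)] by blast
  obtain Q where "finite Q" and Q: "\<And>p Q' F. p \<in> P \<Longrightarrow> finite Q' \<Longrightarrow> Q \<subseteq> Q' \<Longrightarrow>
     M F (fst p) (snd p) = (\<Sum>q\<in>Q'. F (fst q) (snd q) * M (basis (fst q) (snd q)) (fst p) (snd p))"
    by (rule flinear_expand_superset_uniform[OF assms(2) \<open>finite P\<close>]) (rule that)
  have "L (M F) mu U = (\<Sum>q\<in>Q. F (fst q) (snd q) * L (M (basis (fst q) (snd q))) mu U)" for F
  proof -
    have "L (M F) mu U = (\<Sum>p\<in>P. \<Sum>q\<in>Q. F (fst q) (snd q) *
                       (M (basis (fst q) (snd q)) (fst p) (snd p) * L (basis (fst p) (snd p)) mu U))"
      unfolding P[of "M F"] by (intro sum.cong refl) (simp only: Q[OF _ \<open>finite Q\<close> order_refl, of _ F] sum_distrib_right mult.assoc)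
    also have "\<dots> = (\<Sum>q\<in>Q. F (fst q) (snd q) *
                       (\<Sum>p\<in>P. M (basis (fst q) (snd q)) (fst p) (snd p) * L (basis (fst p) (snd p)) mu U))"
      by (subst sum.swap) (simp only: sum_distrib_left)
    also have "\<dots> = (\<Sum>q\<in>Q. F (fst q) (snd q) * L (M (basis (fst q) (snd q))) mu U)"
      by (simp add: P[symmetric])
    finally show ?thesis .
  qed
  then show "\<exists>Q. finite Q \<and> (\<forall>F. L (M F) mu U = (\<Sum>q\<in>Q. F (fst q) (snd q) * L (M (basis (fst q) (snd q))) mu U))"
    using \<open>finite Q\<close> by blast
qed

lemma flinear_diff:
  assumes "flinear L" shows "L (A - B) = L A - L B"
proof (intro ext)
  fix mu U
  obtain Q where "\<And>F. L F mu U = (\<Sum>q\<in>Q. F (fst q) (snd q) * L (basis (fst q) (snd q)) mu U)"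
    using flinear_expand[OF assms] by blast
  note Q = this[of "A - B"] this[of A] this[of B]
  show "L (A - B) mu U = (L A - L B) mu U"
    unfolding minus_apply Q by (simp add: sum_subtractf left_diff_distrib)
qed

lemma flinear_zero: "flinear L \<Longrightarrow> L 0 = 0"
  using flinear_diff[of L 0 0] by simp

lemma flinear_uminus: "flinear L \<Longrightarrow> L (- A) = - L A"
  using flinear_diff[of L 0 A] flinear_zero[of L] by simp

lemma flinear_scale:
  assumes "flinear L" shows "L (scale k A) = scale k (L A)"
proof (intro ext)
  fix mu U
  obtain Q where "\<And>F. L F mu U = (\<Sum>q\<in>Q. F (fst q) (snd q) * L (basis (fst q) (snd q)) mu U)"
    using flinear_expand[OF assms] by blast
  note Q = this[of "\<lambda>mu U. k * A mu U"] this[of A]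
  show "L (scale k A) mu U = scale k (L A) mu U"
    unfolding scale_def Q by (simp add: sum_distrib_left mult.assoc)
qed

lemma flinear_pointwise: "flinear (\<lambda>F mu U. k mu U * F mu U)"
proof (rule flinearI)
  fix mu U
  show "\<exists>Q. finite Q \<and> (\<forall>F. k mu U * F mu U = (\<Sum>q\<in>Q. F (fst q) (snd q) * (k mu U * basis (fst q) (snd q) mu U)))"
    by (rule exI[of _ "{(mu, U)}"]) (simp add: basis_def)
qed

section \<open>The wedge product\<close>

lemma wedge_eq_sum_lower_monos: "wedge A B mu U = (if finite U then
   (\<Sum>a\<in>lower_monos mu. \<Sum>S\<in>Pow U. wsign S (U - S) * A a S * B (mu - a) (U - S)) else 0)"
proof -
  have "inj_on (\<lambda>a. (a, mu - a)) (lower_monos mu)" by (auto intro: inj_onI)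
  then show ?thesis unfolding wedge_def add_eq_pairs_eq_image by (simp add: sum.reindex)
qed

lemma wedge_nonzeroD:
  assumes "wedge A B mu U \<noteq> 0"
  obtains a S where "S \<subseteq> U" "A a S \<noteq> 0" "B (mu - a) (U - S) \<noteq> 0"
proof -
  have "finite U" using assms by (auto simp: wedge_def split: if_splits)
  then have "(\<Sum>a\<in>lower_monos mu. \<Sum>S\<in>Pow U. wsign S (U - S) * A a S * B (mu - a) (U - S)) \<noteq> 0"
    using assms by (simp add: wedge_eq_sum_lower_monos)
  then obtain a where "(\<Sum>S\<in>Pow U. wsign S (U - S) * A a S * B (mu - a) (U - S)) \<noteq> 0"
    by (rule sum.not_neutral_contains_not_neutral)
  then obtain S where "S \<in> Pow U" "wsign S (U - S) * A a S * B (mu - a) (U - S) \<noteq> 0"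
    by (rule sum.not_neutral_contains_not_neutral)
  then show ?thesis using that by auto
qed

lemma sum_sum_delta:
  assumes "finite A" "finite B" "\<And>x y. x \<in> A \<Longrightarrow> y \<in> B \<Longrightarrow> x \<noteq> a \<or> y \<noteq> b \<Longrightarrow> f x y = 0"
  shows "(\<Sum>x\<in>A. \<Sum>y\<in>B. f x y) = (if a \<in> A \<and> b \<in> B then f a b else 0)"
proof -
  have "(\<Sum>x\<in>A. \<Sum>y\<in>B. f x y) = (\<Sum>x\<in>A. if x = a then \<Sum>y\<in>B. if y = b then f x y else 0 else 0)"
    using assms(3) by (intro sum.cong) (auto intro: sum.cong)
  then show ?thesis using assms(1,2) by (simp add: sum.delta)
qed

lemma wedge_basis_left: "wedge (basis a S0) B mu U = (if finite U \<and> S0 \<subseteq> U \<and> a \<in> lower_monos mu then wsign S0 (U - S0) * B (mu - a) (U - S0) else 0)"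
proof (cases "finite U")
  case True
  have "wedge (basis a S0) B mu U = (\<Sum>x\<in>lower_monos mu. \<Sum>S\<in>Pow U. wsign S (U - S) * basis a S0 x S * B (mu - x) (U - S))"
    using True by (simp add: wedge_eq_sum_lower_monos)
  also have "\<dots> = (if a \<in> lower_monos mu \<and> S0 \<in> Pow U then wsign S0 (U - S0) * basis a S0 a S0 * B (mu - a) (U - S0) else 0)"
    using True by (intro sum_sum_delta) (auto simp: finite_lower_monos basis_def)
  finally show ?thesis using True by (auto simp: basis_def)
qed (simp add: wedge_def)

lemma wedge_basis_right: "wedge A (basis b T) mu U =
    (if finite U \<and> T \<subseteq> U \<and> b \<in> lower_monos mu then wsign (U - T) T * A (mu - b) (U - T) else 0)"
proof (cases "finite U")
  case True
  have off_diagonal: "basis b T (mu - a) (U - S) = 0"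
    if "a \<in> lower_monos mu" "S \<subseteq> U" "a \<noteq> mu - b \<or> S \<noteq> U - T" for a S
    using that lower_monos_compl[of a mu] by (auto simp: basis_def)
  have "wedge A (basis b T) mu U =
      (\<Sum>a\<in>lower_monos mu. \<Sum>S\<in>Pow U. wsign S (U - S) * A a S * basis b T (mu - a) (U - S))"
    using True by (simp add: wedge_eq_sum_lower_monos)
  also have "\<dots> = (if mu - b \<in> lower_monos mu \<and> U - T \<in> Pow U then wsign (U - T) (U - (U - T)) * A (mu - b) (U - T)
                      * basis b T (mu - (mu - b)) (U - (U - T)) else 0)"
    using True off_diagonal by (intro sum_sum_delta) (auto simp: finite_lower_monos)
  finally show ?thesis
    using True by (auto simp: basis_def double_diff diff_diff_eq_iff_lower_monos diff_in_lower_monos)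
qed (simp add: wedge_def)

lemma flinear_wedge_left: "flinear (\<lambda>A. wedge A B)"
proof (rule flinearI)
  fix mu U
  show "\<exists>Q. finite Q \<and> (\<forall>F. wedge F B mu U = (\<Sum>q\<in>Q. F (fst q) (snd q) * wedge (basis (fst q) (snd q)) B mu U))"
  proof (cases "finite U")
    case True
    show ?thesis
    proof (intro exI[of _ "lower_monos mu \<times> Pow U"] conjI allI)
      show "finite (lower_monos mu \<times> Pow U)" using True finite_lower_monos by simp
      fix F
      have "(\<Sum>q\<in>lower_monos mu \<times> Pow U. F (fst q) (snd q) * wedge (basis (fst q) (snd q)) B mu U)
          = (\<Sum>q\<in>lower_monos mu \<times> Pow U. F (fst q) (snd q) * (wsign (snd q) (U - snd q) * B (mu - fst q) (U - snd q)))"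
        using True by (intro sum.cong refl) (auto simp: wedge_basis_left)
      also have "\<dots> = (\<Sum>a\<in>lower_monos mu. \<Sum>S\<in>Pow U. F a S * (wsign S (U - S) * B (mu - a) (U - S)))"
        by (simp add: sum.cartesian_product split_def)
      also have "\<dots> = wedge F B mu U"
        using True by (simp add: wedge_eq_sum_lower_monos mult_ac)
      finally show "wedge F B mu U = (\<Sum>q\<in>lower_monos mu \<times> Pow U. F (fst q) (snd q) * wedge (basis (fst q) (snd q)) B mu U)" ..
    qed
  next
    case False
    then show ?thesis by (intro exI[of _ "{}"]) (simp add: wedge_def)
  qed
qed

lemma flinear_wedge_right: "flinear (\<lambda>B. wedge A B)"
proof (rule flinearI)
  fix mu U
  show "\<exists>Q. finite Q \<and> (\<forall>F. wedge A F mu U = (\<Sum>q\<in>Q. F (fst q) (snd q) * wedge A (basis (fst q) (snd q)) mu U))"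
  proof (cases "finite U")
    case True
    show ?thesis
    proof (intro exI[of _ "lower_monos mu \<times> Pow U"] conjI allI)
      show "finite (lower_monos mu \<times> Pow U)" using True finite_lower_monos by simp
      fix F
      have "(\<Sum>q\<in>lower_monos mu \<times> Pow U. F (fst q) (snd q) * wedge A (basis (fst q) (snd q)) mu U)
          = (\<Sum>q\<in>lower_monos mu \<times> Pow U. F (fst q) (snd q) * (wsign (U - snd q) (snd q) * A (mu - fst q) (U - snd q)))"
        using True by (intro sum.cong refl) (auto simp: wedge_basis_right)
      also have "\<dots> = (\<Sum>q\<in>lower_monos mu \<times> Pow U. wsign (snd q) (U - snd q) * A (fst q) (snd q) * F (mu - fst q) (U - snd q))"
        by (rule sum.reindex_bij_witness[where i="\<lambda>q. (mu - fst q, U - snd q)" and j="\<lambda>q. (mu - fst q, U - snd q)"])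
          (auto simp: double_diff mult_ac prod_eq_iff dest: lower_monos_compl)
      also have "\<dots> = wedge A F mu U"
        using True by (simp add: wedge_eq_sum_lower_monos sum.cartesian_product split_def mult_ac)
      finally show "wedge A F mu U = (\<Sum>q\<in>lower_monos mu \<times> Pow U. F (fst q) (snd q) * wedge A (basis (fst q) (snd q)) mu U)" ..
    qed
  next
    case False
    then show ?thesis by (intro exI[of _ "{}"]) (simp add: wedge_def)
  qed
qed

lemma wedge_scale_left: "wedge (scale k A) B = scale k (wedge A B)"
  using flinear_scale[OF flinear_wedge_left] by simp

lemma wedge_scale_right: "wedge A (scale k B) = scale k (wedge A B)"
  using flinear_scale[OF flinear_wedge_right] by simp

lemma wedge_zero_left[simp]: "wedge 0 B = 0"
  using flinear_zero[OF flinear_wedge_left] by simp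

lemma wedge_zero_right[simp]: "wedge A 0 = 0"
  using flinear_zero[OF flinear_wedge_right] by simp

lemma wedge_diff_left: "wedge (A - A') B = wedge A B - wedge A' B"
  using flinear_diff[OF flinear_wedge_left] by simp

lemma wedge_diff_right: "wedge A (B - B') = wedge A B - wedge A B'"
  using flinear_diff[OF flinear_wedge_right] by simp

lemma wedge_uminus_left: "wedge (- A) B = - wedge A B"
  using flinear_uminus[OF flinear_wedge_left] by simp

lemma wsign_empty_left[simp]: "wsign {} T = 1" by (simp add: wsign_def)

lemma wsign_empty_right[simp]: "wsign T {} = 1" by (simp add: wsign_def)

lemma wsign_singletons: "wsign {s} {t} = (if s < t then -1 else 1)"
proof -
  have "{(a, b). a \<in> {s} \<and> b \<in> {t} \<and> a < b} = (if s < t then {(s, t)} else {})" by auto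
  then show ?thesis by (simp add: wsign_def)
qed

lemma wsign_pairs_finite: "finite S \<Longrightarrow> finite T \<Longrightarrow> finite {(a, b). a \<in> S \<and> b \<in> T \<and> a < (b::nat)}"
  by (rule finite_subset[of _ "S \<times> T"]) auto

lemma wsign_Un_left:
  assumes "finite S" "finite T" "finite R" "S \<inter> T = {}"
  shows "wsign (S \<union> T) R = wsign S R * wsign T R"
proof -
  have e: "{(a, b). a \<in> S \<union> T \<and> b \<in> R \<and> a < b} = {(a, b). a \<in> S \<and> b \<in> R \<and> a < b} \<union> {(a, b). a \<in> T \<and> b \<in> R \<and> a < b}"
    by auto
  have "card {(a, b). a \<in> S \<union> T \<and> b \<in> R \<and> a < b} = card {(a, b). a \<in> S \<and> b \<in> R \<and> a < b} + card {(a, b). a \<in> T \<and> b \<in> R \<and> a < b}"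
    unfolding e using assms by (intro card_Un_disjoint wsign_pairs_finite) auto
  then show ?thesis unfolding wsign_def by (simp add: power_add)
qed

lemma wsign_Un_right:
  assumes "finite S" "finite T" "finite R" "T \<inter> R = {}"
  shows "wsign S (T \<union> R) = wsign S T * wsign S R"
proof -
  have e: "{(a, b). a \<in> S \<and> b \<in> T \<union> R \<and> a < b} = {(a, b). a \<in> S \<and> b \<in> T \<and> a < b} \<union> {(a, b). a \<in> S \<and> b \<in> R \<and> a < b}"
    by auto
  have "card {(a, b). a \<in> S \<and> b \<in> T \<union> R \<and> a < b} = card {(a, b). a \<in> S \<and> b \<in> T \<and> a < b} + card {(a, b). a \<in> S \<and> b \<in> R \<and> a < b}"
    unfolding e using assms by (intro card_Un_disjoint wsign_pairs_finite) auto
  then show ?thesis unfolding wsign_def by (simp add: power_add)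
qed

lemma wedge_basis_basis: "wedge (basis a S) (basis b T) =
    (if finite S \<and> finite T \<and> S \<inter> T = {} then scale (wsign S T) (basis (a + b) (S \<union> T)) else 0)"
proof (intro ext)
  fix mu U
  have iff: "(finite U \<and> S \<subseteq> U \<and> a \<in> lower_monos mu \<and> mu - a = b \<and> U - S = T) \<longleftrightarrow>
      (finite S \<and> finite T \<and> S \<inter> T = {} \<and> mu = a + b \<and> U = S \<union> T)"
    using lower_monos_diff_iff[of a mu b] by (auto intro: finite_subset)
  have "wedge (basis a S) (basis b T) mu U =
      (if finite U \<and> S \<subseteq> U \<and> a \<in> lower_monos mu \<and> mu - a = b \<and> U - S = T then wsign S (U - S) else 0)"
    unfolding wedge_basis_left by (simp add: basis_def)
  also have "\<dots> = (if finite S \<and> finite T \<and> S \<inter> T = {} \<and> mu = a + b \<and> U = S \<union> T then wsign S T else 0)"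
    unfolding iff by (auto simp: Un_Diff Diff_triv Int_commute)
  finally show "wedge (basis a S) (basis b T) mu U =
    (if finite S \<and> finite T \<and> S \<inter> T = {} then scale (wsign S T) (basis (a + b) (S \<union> T)) else 0) mu U"
    by (simp add: scale_def basis_def)
qed

lemma wedge_assoc_basis: "wedge (wedge (basis a S) (basis b T)) (basis c R) = wedge (basis a S) (wedge (basis b T) (basis c R))"
proof (cases "finite S \<and> finite T \<and> finite R \<and> S \<inter> T = {} \<and> S \<inter> R = {} \<and> T \<inter> R = {}")
  case True
  then have "wsign S T * wsign (S \<union> T) R = wsign T R * wsign S (T \<union> R)"
    by (simp add: wsign_Un_left wsign_Un_right)
  then show ?thesis using True
    by (simp add: wedge_basis_basis wedge_scale_left wedge_scale_right Int_Un_distrib Int_Un_distrib2 add.assoc Un_assoc mult.commute)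
next
  case False
  then show ?thesis
    by (auto simp: wedge_basis_basis wedge_scale_left wedge_scale_right Int_Un_distrib Int_Un_distrib2)
qed

lemma wedge_assoc: "wedge (wedge A B) C = wedge A (wedge B C)"
proof -
  have basis_basis: "wedge (wedge (basis a S) (basis b T)) C = wedge (basis a S) (wedge (basis b T) C)" for a S b T
    by (rule flinear_eqI[where L="\<lambda>C. wedge (wedge (basis a S) (basis b T)) C" and M="\<lambda>C. wedge (basis a S) (wedge (basis b T) C)",
          OF flinear_wedge_right flinear_comp[OF flinear_wedge_right flinear_wedge_right] wedge_assoc_basis])
  have basis_left: "wedge (wedge (basis a S) B) C = wedge (basis a S) (wedge B C)" for a S
    by (rule flinear_eqI[where L="\<lambda>B. wedge (wedge (basis a S) B) C" and M="\<lambda>B. wedge (basis a S) (wedge B C)",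
          OF flinear_comp[OF flinear_wedge_left flinear_wedge_right] flinear_comp[OF flinear_wedge_right flinear_wedge_left] basis_basis])
  show ?thesis
    by (rule flinear_eqI[where L="\<lambda>A. wedge (wedge A B) C" and M="\<lambda>A. wedge A (wedge B C)",
          OF flinear_comp[OF flinear_wedge_left flinear_wedge_left] flinear_wedge_left basis_left])
qed

text \<open>Coefficients at infinite sets are junk; wedge products never have any.\<close>

definition fin_sets :: "ser \<Rightarrow> bool" where "fin_sets F \<longleftrightarrow> (\<forall>mu U. infinite U \<longrightarrow> F mu U = 0)"

lemma fin_sets_wedge: "fin_sets (wedge A B)" by (simp add: fin_sets_def wedge_def)

lemma fin_sets_wunit: "fin_sets wunit" by (simp add: fin_sets_def wunit_def)

lemma fin_sets_wedge_list: "fin_sets (wedge_list xs)" by (cases xs) (simp_all add: fin_sets_wedge fin_sets_wunit)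

lemma wunit_eq_basis: "wunit = basis 0 {}" by (simp add: wunit_def basis_def fun_eq_iff)

lemma mono_eq_basis: "mono a = basis a {}" by (simp add: mono_def basis_def fun_eq_iff)

lemma wedge_wunit_left: "fin_sets F \<Longrightarrow> wedge wunit F = F"
  by (auto simp: fun_eq_iff wunit_eq_basis wedge_basis_left zero_in_lower_monos fin_sets_def)

lemma wedge_wunit_right: "fin_sets F \<Longrightarrow> wedge F wunit = F"
  by (auto simp: fun_eq_iff wunit_eq_basis wedge_basis_right zero_in_lower_monos fin_sets_def)

lemma wedge_list_append: "wedge_list (xs @ ys) = wedge (wedge_list xs) (wedge_list ys)"
  by (induction xs) (simp_all add: wedge_wunit_left fin_sets_wedge_list wedge_assoc)

section \<open>Scalars and vectors\<close>

definition scalar_part :: "ser \<Rightarrow> ser" where "scalar_part F = (\<lambda>mu U. if U = {} then F mu U else 0)"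

definition vector_part :: "ser \<Rightarrow> ser" where "vector_part F = (\<lambda>mu U. if card U = 1 then F mu U else 0)"

definition is_scalar :: "ser \<Rightarrow> bool" where "is_scalar F \<longleftrightarrow> (\<forall>mu U. U \<noteq> {} \<longrightarrow> F mu U = 0)"

definition is_vector :: "ser \<Rightarrow> bool" where "is_vector F \<longleftrightarrow> (\<forall>mu U. card U \<noteq> 1 \<longrightarrow> F mu U = 0)"

lemma flinear_scalar_part: "flinear scalar_part"
proof -
  have e: "scalar_part = (\<lambda>F mu U. (if U = {} then 1 else 0) * F mu U)" by (auto simp: scalar_part_def fun_eq_iff)
  show ?thesis by (subst e) (rule flinear_pointwise)
qed

lemma flinear_vector_part: "flinear vector_part"
proof -
  have e: "vector_part = (\<lambda>F mu U. (if card U = 1 then 1 else 0) * F mu U)" by (auto simp: vector_part_def fun_eq_iff)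
  show ?thesis by (subst e) (rule flinear_pointwise)
qed

lemma flinear_uminus_op: "flinear uminus"
proof -
  have e: "(uminus :: ser \<Rightarrow> ser) = (\<lambda>F mu U. (-1) * F mu U)" by (auto simp: fun_eq_iff)
  show ?thesis by (subst e) (rule flinear_pointwise)
qed

lemma scalar_part_basis: "scalar_part (basis a S) = (if S = {} then basis a S else 0)"
  by (auto simp: scalar_part_def basis_def fun_eq_iff)

lemma vector_part_basis: "vector_part (basis a S) = (if card S = 1 then basis a S else 0)"
  by (auto simp: vector_part_def basis_def fun_eq_iff)

lemma scalar_part_eq: "is_scalar c \<Longrightarrow> scalar_part c = c" by (auto simp: is_scalar_def scalar_part_def fun_eq_iff)

lemma vector_part_eq: "is_vector c \<Longrightarrow> vector_part c = c" by (auto simp: is_vector_def vector_part_def fun_eq_iff)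

text \<open>Commutation rules are stated through the projections so that both sides are flinear in each
  argument and it suffices to compare them on basis elements.\<close>

lemma wedge_scalar_part_commute: "wedge (scalar_part c) X = wedge X (scalar_part c)"
proof -
  have basis_basis: "wedge (scalar_part (basis a S)) (basis b T) = wedge (basis b T) (scalar_part (basis a S))" for a S b T
    by (simp add: scalar_part_basis wedge_basis_basis add.commute)
  have basis_left: "wedge (scalar_part (basis a S)) X = wedge X (scalar_part (basis a S))" for a S
    by (rule flinear_eqI[where L="\<lambda>X. wedge (scalar_part (basis a S)) X" and M="\<lambda>X. wedge X (scalar_part (basis a S))",
          OF flinear_wedge_right flinear_wedge_left basis_basis])
  show ?thesis
    by (rule flinear_eqI[where L="\<lambda>c. wedge (scalar_part c) X" and M="\<lambda>c. wedge X (scalar_part c)",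
          OF flinear_comp[OF flinear_wedge_left flinear_scalar_part] flinear_comp[OF flinear_wedge_right flinear_scalar_part] basis_left])
qed

lemma wedge_scalar_commute: "is_scalar c \<Longrightarrow> wedge c X = wedge X c"
  using wedge_scalar_part_commute[of c X] scalar_part_eq by simp

lemma wedge_scalar_left_commute: "is_scalar c \<Longrightarrow> wedge x (wedge c Y) = wedge c (wedge x Y)"
proof -
  assume c: "is_scalar c"
  have "wedge x (wedge c Y) = wedge (wedge x c) Y" by (simp add: wedge_assoc)
  also have "wedge x c = wedge c x" using wedge_scalar_commute[OF c] by simp
  finally show ?thesis by (simp add: wedge_assoc)
qed

lemma wedge_vector_part_anticommute: "wedge (vector_part x) (vector_part y) = - wedge (vector_part y) (vector_part x)"
proof -
  have basis_basis: "wedge (vector_part (basis a S)) (vector_part (basis b T)) = - wedge (vector_part (basis b T)) (vector_part (basis a S))" for a S b T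
  proof (cases "card S = 1 \<and> card T = 1")
    case True
    then obtain s t where st: "S = {s}" "T = {t}" by (auto simp: card_Suc_eq)
    show ?thesis
    proof (cases "s = t")
      case True then show ?thesis using st by (simp add: vector_part_basis wedge_basis_basis)
    next
      case False
      then have "s < t \<or> t < s" by auto
      then show ?thesis using st False by (auto simp: vector_part_basis wedge_basis_basis uminus_scale wsign_singletons add.commute insert_commute)
    qed
  next
    case False then show ?thesis by (auto simp: vector_part_basis)
  qed
  have basis_left: "wedge (vector_part (basis a S)) (vector_part y) = - wedge (vector_part y) (vector_part (basis a S))" for a S
    by (rule flinear_eqI[where L="\<lambda>y. wedge (vector_part (basis a S)) (vector_part y)" and M="\<lambda>y. - wedge (vector_part y) (vector_part (basis a S))",
          OF flinear_comp[OF flinear_wedge_right flinear_vector_part]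
             flinear_comp[OF flinear_uminus_op flinear_comp[OF flinear_wedge_left flinear_vector_part]] basis_basis])
  show ?thesis
    by (rule flinear_eqI[where L="\<lambda>x. wedge (vector_part x) (vector_part y)" and M="\<lambda>x. - wedge (vector_part y) (vector_part x)",
          OF flinear_comp[OF flinear_wedge_left flinear_vector_part]
             flinear_comp[OF flinear_uminus_op flinear_comp[OF flinear_wedge_right flinear_vector_part]] basis_left])
qed

lemma wedge_vector_anticommute: "is_vector x \<Longrightarrow> is_vector y \<Longrightarrow> wedge x y = - wedge y x"
  using wedge_vector_part_anticommute[of x y] vector_part_eq by simp

lemma wedge_vector_self: "is_vector x \<Longrightarrow> wedge x x = 0"
  using wedge_vector_anticommute[of x x] by (auto simp: fun_eq_iff)

lemma is_vector_diff: "is_vector x \<Longrightarrow> is_vector y \<Longrightarrow> is_vector (x - y)" by (simp add: is_vector_def)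

lemma is_scalar_diff: "is_scalar x \<Longrightarrow> is_scalar y \<Longrightarrow> is_scalar (x - y)" by (simp add: is_scalar_def)

lemma wedge_scalar_apply:
  assumes "is_scalar c"
  shows "wedge c x mu U = (if finite U then \<Sum>a\<in>lower_monos mu. c a {} * x (mu - a) U else 0)"
proof (cases "finite U")
  case True
  have "(\<Sum>S\<in>Pow U. wsign S (U - S) * c a S * x (mu - a) (U - S)) = c a {} * x (mu - a) U" for a
    using assms by (subst sum.mono_neutral_right[of "Pow U" "{{}}"]) (auto simp: True is_scalar_def)
  then show ?thesis using True by (simp add: wedge_eq_sum_lower_monos)
qed (simp add: wedge_def)

lemma is_vector_wedge_scalar: "is_scalar c \<Longrightarrow> is_vector x \<Longrightarrow> is_vector (wedge c x)"
  by (simp add: is_vector_def wedge_scalar_apply)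

lemma is_scalar_wedge: "is_scalar c \<Longrightarrow> is_scalar x \<Longrightarrow> is_scalar (wedge c x)"
  by (simp add: is_scalar_def wedge_scalar_apply)

lemma is_scalar_wunit: "is_scalar wunit" by (simp add: is_scalar_def wunit_def)

lemma is_scalar_wedge_list: "\<forall>x\<in>set xs. is_scalar x \<Longrightarrow> is_scalar (wedge_list xs)"
  by (induction xs) (simp_all add: is_scalar_wunit is_scalar_wedge)

lemma fin_sets_vector: "is_vector x \<Longrightarrow> fin_sets x"
  by (auto simp: fin_sets_def is_vector_def)

lemma is_scalar_mono: "is_scalar (mono a)" by (simp add: is_scalar_def mono_def)

lemma wedge_mono_mono: "wedge (mono a) (mono b) = mono (a + b)"
  by (simp add: mono_eq_basis wedge_basis_basis)

lemma wedge_mono_wedge_mono: "wedge (wedge (mono a) X) (wedge (mono b) Y) = wedge (mono (a + b)) (wedge X Y)"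
proof -
  have "wedge (wedge (mono a) X) (wedge (mono b) Y) = wedge (mono a) (wedge (wedge X (mono b)) Y)"
    by (simp add: wedge_assoc)
  also have "wedge X (mono b) = wedge (mono b) X" using wedge_scalar_commute[OF is_scalar_mono] by simp
  also have "wedge (mono a) (wedge (wedge (mono b) X) Y) = wedge (wedge (mono a) (mono b)) (wedge X Y)"
    by (simp add: wedge_assoc)
  finally show ?thesis by (simp add: wedge_mono_mono)
qed

lemma mono_zero: "mono 0 = wunit" by (simp add: mono_eq_basis wunit_eq_basis)

lemma var_eq_mono: "var t = mono (Poly_Mapping.single t 1)" by (simp add: var_def)

lemma is_scalar_var: "is_scalar (var t)" by (simp add: var_eq_mono is_scalar_mono)

lemma ssub_eq_minus: "ssub A B = A - B" by (simp add: ssub_def fun_eq_iff)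

definition desc_list :: "nat set \<Rightarrow> nat list" where "desc_list S = rev (sorted_list_of_set S)"

lemma desc_list_insert_max:
  assumes "finite A" "\<forall>a\<in>A. a < b"
  shows "desc_list (insert b A) = b # desc_list A"
proof -
  have "b \<notin> A" using assms by auto
  then have "sorted_list_of_set (insert b A) = insort b (sorted_list_of_set A)"
    using assms(1) by (simp add: sorted_list_of_set_insert_remove)
  also have "\<dots> = sorted_list_of_set A @ [b]"
    using assms by (intro sorted_insort_is_snoc) auto
  finally show ?thesis by (simp add: desc_list_def)
qed

lemma desc_list_empty[simp]: "desc_list {} = []" by (simp add: desc_list_def)

lemma set_desc_list: "finite S \<Longrightarrow> set (desc_list S) = S" by (simp add: desc_list_def)

lemma desc_list_singleton: "desc_list {m} = [m]" by (simp add: desc_list_def)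

lemma wedge_wedge_list_mem:
  assumes "\<forall>y\<in>set ys. is_vector y" "is_vector x" "x \<in> set ys"
  shows "wedge x (wedge_list ys) = 0"
  using assms
proof (induction ys)
  case Nil then show ?case by simp
next
  case (Cons y ys)
  show ?case
  proof (cases "x = y")
    case True
    have "wedge x (wedge y (wedge_list ys)) = wedge (wedge x y) (wedge_list ys)" by (simp add: wedge_assoc)
    also have "wedge x y = 0" using True Cons.prems wedge_vector_self by simp
    finally show ?thesis by simp
  next
    case False
    then have "x \<in> set ys" using Cons by simp
    then have "wedge x (wedge_list ys) = 0" using Cons by simp
    have "wedge x (wedge y (wedge_list ys)) = wedge (wedge x y) (wedge_list ys)" by (simp add: wedge_assoc)
    also have "\<dots> = wedge (- wedge y x) (wedge_list ys)" using Cons.prems wedge_vector_anticommute[of x y] by simp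
    also have "\<dots> = - wedge y (wedge x (wedge_list ys))" by (simp add: wedge_uminus_left wedge_assoc)
    also have "\<dots> = - wedge y 0" using \<open>wedge x (wedge_list ys) = 0\<close> by simp
    also have "\<dots> = 0" by (simp add: lambda_zero)
    finally show ?thesis by simp
  qed
qed

lemma wedge_list_not_distinct:
  assumes "\<forall>y\<in>set ys. is_vector y" "\<not> distinct ys"
  shows "wedge_list ys = 0"
  using assms
proof (induction ys)
  case Nil then show ?case by simp
next
  case (Cons y ys)
  show ?case
  proof (cases "y \<in> set ys")
    case True then show ?thesis using Cons wedge_wedge_list_mem by simp
  next
    case False
    have z: "wedge_list ys = 0" by (rule Cons.IH) (use Cons False in auto)
    show ?thesis by (simp add: z)
  qed
qed

lemma wsign_singleton_greater:
  assumes "\<forall>b\<in>T. b < x" shows "wsign {x} T = 1"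
proof -
  have no_pairs: "{(a, b). a \<in> {x} \<and> b \<in> T \<and> a < b} = {}" using assms by auto
  show ?thesis unfolding wsign_def no_pairs by simp
qed

lemma wedge_wedge_list_desc_insert:
  assumes f: "\<And>k. is_vector (f k)" and "finite T" "x \<notin> T"
  shows "wedge (f x) (wedge_list (map f (desc_list T))) = scale (wsign {x} T) (wedge_list (map f (desc_list (insert x T))))"
  using assms(2,3)
proof (induction T rule: finite_linorder_max_induct)
  case empty
  then show ?case by (simp add: desc_list_insert_max)
next
  case (insert t T)
  have desc_t: "desc_list (insert t T) = t # desc_list T" using insert by (simp add: desc_list_insert_max)
  show ?case
  proof (cases "t < x")
    case True
    then have "\<forall>b\<in>insert t T. b < x" using insert by auto
    then have "desc_list (insert x (insert t T)) = x # desc_list (insert t T)" "wsign {x} (insert t T) = 1"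
      using insert by (simp_all add: desc_list_insert_max wsign_singleton_greater)
    then show ?thesis by simp
  next
    case False
    then have "x < t" using insert by auto
    then have desc_x: "desc_list (insert x (insert t T)) = t # desc_list (insert x T)"
      using insert by (simp add: insert_commute desc_list_insert_max)
    have sign: "wsign {x} (insert t T) = - wsign {x} T"
      using wsign_Un_right[of "{x}" "{t}" T] insert \<open>x < t\<close> by (auto simp: wsign_singletons)
    have "wedge (f x) (wedge_list (map f (desc_list (insert t T))))
        = - wedge (f t) (wedge (f x) (wedge_list (map f (desc_list T))))"
      using wedge_vector_anticommute[OF f f, of x t] by (simp add: desc_t wedge_uminus_left flip: wedge_assoc)
    also have "\<dots> = scale (wsign {x} (insert t T)) (wedge_list (map f (desc_list (insert x (insert t T)))))"
      using insert \<open>x < t\<close> by (simp add: sign desc_x wedge_scale_right uminus_scale)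
    finally show ?thesis .
  qed
qed

lemma wedge_list_desc_merge:
  assumes f: "\<And>k. is_vector (f k)" and "finite S" "finite T" "S \<inter> T = {}"
  shows "wedge_list (map f (desc_list S @ desc_list T)) = scale (wsign S T) (wedge_list (map f (desc_list (S \<union> T))))"
  using assms(2-)
proof (induction S rule: finite_linorder_max_induct)
  case empty
  then show ?case by simp
next
  case (insert s S)
  have "s \<notin> S" using insert by auto
  have "wsign {s} (S \<union> T) = wsign {s} T"
    using wsign_Un_right[of "{s}" S T] wsign_singleton_greater[of S s] insert by auto
  moreover have "wsign (insert s S) T = wsign {s} T * wsign S T"
    using wsign_Un_left[of "{s}" S T] insert \<open>s \<notin> S\<close> by simp
  moreover have "wedge (f s) (wedge_list (map f (desc_list (S \<union> T))))
      = scale (wsign {s} (S \<union> T)) (wedge_list (map f (desc_list (insert s (S \<union> T)))))"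
    using insert by (intro wedge_wedge_list_desc_insert[where f=f, OF f]) auto
  ultimately show ?case
    using insert by (simp add: desc_list_insert_max wedge_scale_right mult.commute)
qed

section \<open>Difference operators\<close>

definition shift_diff :: "ser \<Rightarrow> (nat \<Rightarrow> ser) \<Rightarrow> nat \<Rightarrow> ser" where
  "shift_diff c u = (\<lambda>k. u k - wedge c (u (Suc k)))"

definition shift_diffs :: "ser list \<Rightarrow> (nat \<Rightarrow> ser) \<Rightarrow> nat \<Rightarrow> ser" where
  "shift_diffs cs u = foldr shift_diff cs u"

lemma shift_diffs_Nil[simp]: "shift_diffs [] u = u" by (simp add: shift_diffs_def)

lemma shift_diffs_Cons: "shift_diffs (c # cs) u = shift_diff c (shift_diffs cs u)" by (simp add: shift_diffs_def)

lemma is_vector_shift_diff: "is_scalar c \<Longrightarrow> \<forall>k. is_vector (u k) \<Longrightarrow> is_vector (shift_diff c u k)"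
  by (simp add: shift_diff_def is_vector_diff is_vector_wedge_scalar)

lemma is_vector_shift_diffs: "\<forall>c\<in>set cs. is_scalar c \<Longrightarrow> \<forall>k. is_vector (u k) \<Longrightarrow> is_vector (shift_diffs cs u k)"
proof (induction cs arbitrary: k)
  case Nil then show ?case by simp
next
  case (Cons c cs)
  then show ?case by (simp add: shift_diffs_Cons is_vector_shift_diff)
qed

lemma shift_diff_commute:
  assumes a: "is_scalar a" and b: "is_scalar b" shows "shift_diff a (shift_diff b u) = shift_diff b (shift_diff a u)"
proof (rule ext)
  fix k
  have s: "wedge a (wedge b X) = wedge b (wedge a X)" for X
    using wedge_scalar_left_commute[OF b, of a X] .
  show "shift_diff a (shift_diff b u) k = shift_diff b (shift_diff a u) k"
    by (simp add: shift_diff_def wedge_diff_right s algebra_simps)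
qed

lemma shift_diffs_shift_diff: "is_scalar c \<Longrightarrow> \<forall>x\<in>set cs. is_scalar x \<Longrightarrow> shift_diffs cs (shift_diff c u) = shift_diff c (shift_diffs cs u)"
  by (induction cs) (simp_all add: shift_diffs_Cons shift_diff_commute)

lemma shift_diffs_map:
  assumes "\<And>c x y. c \<in> set cs \<Longrightarrow> L (x - wedge c y) = L x - wedge c (L y)"
  shows "shift_diffs cs (\<lambda>k. L (u k)) = (\<lambda>k. L (shift_diffs cs u k))"
  using assms
proof (induction cs)
  case Nil then show ?case by simp
next
  case (Cons c cs)
  then have IH: "shift_diffs cs (\<lambda>k. L (u k)) = (\<lambda>k. L (shift_diffs cs u k))" by simp
  show ?case by (rule ext) (simp add: shift_diffs_Cons IH shift_diff_def Cons.prems)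
qed

fun chain_diff :: "ser \<Rightarrow> ser \<Rightarrow> ser list \<Rightarrow> ser list" where
  "chain_diff c x [] = []"
| "chain_diff c x (v # vs) = (v - wedge c x) # chain_diff c v vs"

lemma wedge_chain_diff:
  assumes c: "is_scalar c" and "is_vector x" "\<forall>v\<in>set vs. is_vector v"
  shows "wedge x (wedge_list (chain_diff c x vs @ ws)) = wedge x (wedge_list (vs @ ws))"
  using assms(2,3)
proof (induction vs arbitrary: x)
  case Nil then show ?case by simp
next
  case (Cons v vs)
  let ?W = "wedge_list (chain_diff c v vs @ ws)"
  have "wedge x (wedge (wedge c x) ?W) = wedge x (wedge c (wedge x ?W))" by (simp add: wedge_assoc)
  also have "\<dots> = wedge c (wedge (wedge x x) ?W)" by (simp add: wedge_scalar_left_commute[OF c] wedge_assoc)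
  also have "\<dots> = 0" using wedge_vector_self[OF Cons.prems(1)] by simp
  finally show ?case
    using Cons by (simp add: wedge_diff_left wedge_diff_right)
qed

lemma wedge_shift_diff_desc:
  assumes "is_scalar c" "\<forall>k. is_vector (v k)"
  shows "wedge (v k) (wedge_list (map (shift_diff c v) (rev [0..<k]) @ ws))
       = wedge (v k) (wedge_list (map v (rev [0..<k]) @ ws))"
proof -
  have "chain_diff c (v k) (map v (rev [0..<k])) = map (shift_diff c v) (rev [0..<k])"
    by (induction k) (simp_all add: shift_diff_def)
  then show ?thesis using wedge_chain_diff[OF assms(1), of "v k" "map v (rev [0..<k])" ws] assms(2) by simp
qed

inductive_set scalar_span :: "ser set \<Rightarrow> ser set" for G where
  span_zero: "0 \<in> scalar_span G"
| span_gen: "g \<in> G \<Longrightarrow> g \<in> scalar_span G"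
| span_diff: "a \<in> scalar_span G \<Longrightarrow> b \<in> scalar_span G \<Longrightarrow> a - b \<in> scalar_span G"
| span_scalar: "is_scalar c \<Longrightarrow> a \<in> scalar_span G \<Longrightarrow> wedge c a \<in> scalar_span G"

lemma scalar_span_add: "a \<in> scalar_span G \<Longrightarrow> b \<in> scalar_span G \<Longrightarrow> a + b \<in> scalar_span G"
proof -
  assume "a \<in> scalar_span G" "b \<in> scalar_span G"
  then have "a - (0 - b) \<in> scalar_span G" by (intro span_diff span_zero)
  then show ?thesis by simp
qed

lemma scalar_span_mono: "s \<in> scalar_span G \<Longrightarrow> G \<subseteq> H \<Longrightarrow> s \<in> scalar_span H"
  by (induction rule: scalar_span.induct) (auto intro: scalar_span.intros)

lemma wedge_scalar_span_zero:
  assumes "s \<in> scalar_span G" "G \<subseteq> set ws" "\<forall>w\<in>set ws. is_vector w"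
  shows "wedge s (wedge_list ws) = 0"
  using assms
proof (induction rule: scalar_span.induct)
  case span_zero then show ?case by simp
next
  case (span_gen g) then show ?case using wedge_wedge_list_mem by blast
next
  case (span_diff a b) then show ?case by (simp add: wedge_diff_left)
next
  case (span_scalar c a) then show ?case by (simp add: wedge_assoc)
qed

text \<open>With P = prod_(t in ts) (z - t), the induction step rests on
  D_(t # ts) u m - (z - t) P u (m+r+1) = (D_ts u m - P u (m+r)) - t (D_ts u (m+1) - P u (m+r+1)) + P D_z u (m+r).\<close>

lemma shift_diffs_minus_in_span:
  assumes z: "is_scalar z" and ts: "\<forall>t\<in>set ts. is_scalar t" and u: "\<forall>k. is_vector (u k)"
  shows "shift_diffs ts u m - wedge (wedge_list (map (ssub z) ts)) (u (m + length ts)) \<in> scalar_span (shift_diff z u ` {m..<m + length ts})"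
  using ts
proof (induction ts arbitrary: m)
  case Nil
  have "wedge wunit (u m) = u m" by (rule wedge_wunit_left[OF fin_sets_vector]) (use u in blast)
  then show ?case by (simp add: span_zero)
next
  case (Cons t ts)
  let ?P = "wedge_list (map (ssub z) ts)"
  let ?r = "length ts"
  let ?G = "shift_diff z u ` {m..<m + Suc ?r}"
  have t: "is_scalar t" and ts': "\<forall>t\<in>set ts. is_scalar t" using Cons.prems by auto
  have P_scalar: "is_scalar ?P" using ts' z by (intro is_scalar_wedge_list) (auto simp: ssub_eq_minus is_scalar_diff)
  define s1 where "s1 = shift_diffs ts u m - wedge ?P (u (m + ?r))"
  define s2 where "s2 = shift_diffs ts u (Suc m) - wedge ?P (u (Suc m + ?r))"
  have s1: "s1 \<in> scalar_span ?G"
    using Cons.IH[OF ts', of m] unfolding s1_def by (rule scalar_span_mono) auto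
  have s2: "s2 \<in> scalar_span ?G"
    using Cons.IH[OF ts', of "Suc m"] unfolding s2_def by (rule scalar_span_mono) auto
  have g: "shift_diff z u (m + ?r) \<in> scalar_span ?G" by (intro span_gen) auto
  have mem: "s1 - wedge t s2 + wedge ?P (shift_diff z u (m + ?r)) \<in> scalar_span ?G"
    by (intro scalar_span_add span_diff span_scalar s1 s2 g t P_scalar)
  let ?u' = "u (Suc m + ?r)"
  have e1: "wedge (wedge z ?P) ?u' = wedge ?P (wedge z ?u')"
    by (simp add: wedge_assoc wedge_scalar_left_commute[OF z])
  have e2: "wedge (wedge t ?P) ?u' = wedge t (wedge ?P ?u')"
    by (simp add: wedge_assoc)
  have "shift_diffs (t # ts) u m - wedge (wedge_list (map (ssub z) (t # ts))) (u (m + length (t # ts)))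
      = shift_diffs ts u m - wedge t (shift_diffs ts u (Suc m)) - wedge (wedge (z - t) ?P) ?u'"
    by (simp add: shift_diffs_Cons shift_diff_def ssub_eq_minus)
  also have "\<dots> = shift_diffs ts u m - wedge t (shift_diffs ts u (Suc m)) - wedge (wedge z ?P) ?u' + wedge (wedge t ?P) ?u'"
    by (simp add: wedge_diff_left)
  also have "\<dots> = s1 - wedge t s2 + wedge ?P (shift_diff z u (m + ?r))"
    unfolding e1 e2 s1_def s2_def shift_diff_def
    by (simp add: wedge_diff_right wedge_diff_left algebra_simps)
  finally have eq: "shift_diffs (t # ts) u m - wedge (wedge_list (map (ssub z) (t # ts))) (u (m + length (t # ts)))
      = s1 - wedge t s2 + wedge ?P (shift_diff z u (m + ?r))" .
  have st: "{m..<m + length (t # ts)} = {m..<m + Suc ?r}" by simp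
  show ?case unfolding eq st by (rule mem)
qed

lemma wedge_shift_diffs_leading:
  assumes z: "is_scalar z" and ts: "\<forall>t\<in>set ts. is_scalar t" and u: "\<forall>k. is_vector (u k)"
  shows "wedge (shift_diffs ts u m) (wedge_list (map (shift_diff z u) (rev [0..<m + length ts])))
       = wedge (wedge_list (map (ssub z) ts)) (wedge (u (m + length ts)) (wedge_list (map (shift_diff z u) (rev [0..<m + length ts]))))"
proof -
  let ?W = "wedge_list (map (shift_diff z u) (rev [0..<m + length ts]))"
  have "wedge (shift_diffs ts u m - wedge (wedge_list (map (ssub z) ts)) (u (m + length ts))) ?W = 0"
  proof (rule wedge_scalar_span_zero)
    show "shift_diffs ts u m - wedge (wedge_list (map (ssub z) ts)) (u (m + length ts))
        \<in> scalar_span (shift_diff z u ` {m..<m + length ts})"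
      by (rule shift_diffs_minus_in_span[OF z ts u])
    show "\<forall>w\<in>set (map (shift_diff z u) (rev [0..<m + length ts])). is_vector w"
      using z u by (auto simp: is_vector_shift_diff)
  qed auto
  then show ?thesis by (simp add: wedge_diff_left wedge_assoc)
qed

text \<open>In the induction on zs, u is replaced by D_z u. The first block is row-reduced against its
  leading factor D_ts u h, which by the previous lemma contributes prod_(t in ts) (z - t) u (h + r).\<close>

lemma wedge_shift_diffs:
  assumes "\<forall>k. is_vector (u k)" "\<forall>z\<in>set zs. is_scalar z" and ts: "\<forall>t\<in>set ts. is_scalar t"
  shows "wedge_list (map (shift_diffs ts u) (rev [0..<length zs]) @ map (shift_diffs zs u) (rev [0..<length ts]))
       = wedge (wedge_list (concat (map (\<lambda>z. map (ssub z) ts) zs))) (wedge_list (map u (rev [0..<length zs + length ts])))"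
  using assms(1,2)
proof (induction zs arbitrary: u)
  case Nil
  then show ?case by (simp add: wedge_wunit_left fin_sets_wedge_list)
next
  case (Cons z zs)
  have z: "is_scalar z" and zs: "\<forall>z\<in>set zs. is_scalar z" and u: "\<forall>k. is_vector (u k)"
    using Cons.prems by auto
  let ?h = "length zs" and ?r = "length ts"
  let ?u' = "shift_diff z u"
  let ?R = "wedge_list (concat (map (\<lambda>z. map (ssub z) ts) zs))"
  let ?P = "wedge_list (map (ssub z) ts)"
  let ?W = "wedge_list (map ?u' (rev [0..<?h + ?r]))"
  have R_scalar: "is_scalar ?R" and P_scalar: "is_scalar ?P"
    using z zs ts by (auto intro!: is_scalar_wedge_list simp: ssub_eq_minus is_scalar_diff)
  have u': "\<forall>k. is_vector (?u' k)" using z u by (simp add: is_vector_shift_diff)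
  have "wedge_list (map (shift_diffs ts u) (rev [0..<Suc ?h]) @ map (shift_diffs (z # zs) u) (rev [0..<?r]))
      = wedge (shift_diffs ts u ?h)
          (wedge_list (map (shift_diffs ts u) (rev [0..<?h]) @ map (shift_diffs zs ?u') (rev [0..<?r])))"
    by (simp add: shift_diffs_Cons shift_diffs_shift_diff[OF z zs])
  also have "\<dots> = wedge (shift_diffs ts u ?h)
          (wedge_list (map (shift_diffs ts ?u') (rev [0..<?h]) @ map (shift_diffs zs ?u') (rev [0..<?r])))"
    using wedge_shift_diff_desc[OF z, of "shift_diffs ts u"] ts u
    by (simp add: is_vector_shift_diffs shift_diffs_shift_diff[OF z ts])
  also have "\<dots> = wedge ?R (wedge (shift_diffs ts u ?h) ?W)"
    using Cons.IH[OF u' zs] by (simp add: wedge_scalar_left_commute[OF R_scalar])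
  also have "wedge (shift_diffs ts u ?h) ?W = wedge ?P (wedge (u (?h + ?r)) ?W)"
    by (rule wedge_shift_diffs_leading[OF z ts u])
  also have "wedge (u (?h + ?r)) ?W = wedge_list (map u (rev [0..<Suc (?h + ?r)]))"
    using wedge_shift_diff_desc[OF z u, of "?h + ?r" "[]"] by simp
  finally show ?case
    by (simp add: wedge_list_append wedge_scalar_left_commute[OF P_scalar] wedge_assoc)
qed

section \<open>The shift operators\<close>

lemma sigma_basis: "sigma n v (basis a S) = (if finite S then wedge (mono a) (wedge_list (map (sigma1 n v) (desc_list S))) else 0)"
proof (intro ext)
  fix mu U
  let ?g = "\<lambda>(\<alpha>, S'). if finite S' then basis a S \<alpha> S' * wedge (mono \<alpha>) (wedge_list (map (sigma1 n v) (rev (sorted_list_of_set S')))) mu U else 0"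
  have "sigma n v (basis a S) mu U = Sum_any ?g" by (simp only: sigma_def)
  also have "Sum_any ?g = sum ?g {(a, S)}" by (rule Sum_any.expand_superset) (auto simp: basis_def split: if_splits)
  also have "\<dots> = (if finite S then wedge (mono a) (wedge_list (map (sigma1 n v) (desc_list S))) else 0) mu U"
    by (simp add: basis_def desc_list_def)
  finally show "sigma n v (basis a S) mu U = (if finite S then wedge (mono a) (wedge_list (map (sigma1 n v) (desc_list S))) else 0) mu U" .
qed

lemma sigma1_nonzeroD: "sigma1 n b w \<beta> S \<noteq> 0 \<Longrightarrow> \<exists>m. S = {m} \<and> enat m < n \<and> w \<le> m \<and> \<beta> = Poly_Mapping.single b (m - w)"
  by (auto simp: sigma1_def split: if_splits)

lemma wedge_list_sigma1_support:
  "wedge_list (map (sigma1 n v) xs) b U \<noteq> 0 \<Longrightarrow> x \<in> set xs \<Longrightarrow> \<exists>m\<in>U. x \<le> m"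
proof (induction xs arbitrary: b U)
  case Nil then show ?case by simp
next
  case (Cons y ys)
  then obtain a S where "S \<subseteq> U" "sigma1 n v y a S \<noteq> 0" and rest: "wedge_list (map (sigma1 n v) ys) (b - a) (U - S) \<noteq> 0"
    by (auto elim: wedge_nonzeroD)
  then obtain m where "S = {m}" "y \<le> m" using sigma1_nonzeroD by blast
  then show ?case
    using Cons.prems(2) Cons.IH[OF rest] \<open>S \<subseteq> U\<close> by auto
qed

lemma wedge_mono_nonzeroD: "wedge (mono a) G mu U \<noteq> 0 \<Longrightarrow> finite U \<and> a \<in> lower_monos mu \<and> G (mu - a) U \<noteq> 0"
  by (simp add: mono_eq_basis wedge_basis_left split: if_splits)

lemma sigma_term_nonzeroD:
  assumes "wedge (mono \<alpha>) (wedge_list (map (sigma1 n v) (desc_list S))) mu U \<noteq> 0" "finite S"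
  shows "finite U" "\<alpha> \<in> lower_monos mu" "S \<subseteq> (\<Union>m\<in>U. {..m})"
proof -
  have "wedge_list (map (sigma1 n v) (desc_list S)) (mu - \<alpha>) U \<noteq> 0"
    using wedge_mono_nonzeroD[OF assms(1)] by auto
  then show "S \<subseteq> (\<Union>m\<in>U. {..m})"
    using wedge_list_sigma1_support assms(2) by (fastforce simp: set_desc_list)
  show "finite U" "\<alpha> \<in> lower_monos mu"
    using wedge_mono_nonzeroD[OF assms(1)] by auto
qed

text \<open>As sigma1 n v s only involves X^m with s \<le> m, a coefficient of sigma n v F at U only depends on
  coefficients of F at sets bounded by max U.\<close>

lemma flinear_sigma: "flinear (sigma n v)"
proof (rule flinearI)
  fix mu :: "nat \<Rightarrow>\<^sub>0 nat" and U :: "nat set"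
  define Q where "Q = (if finite U then lower_monos mu \<times> Pow (\<Union>m\<in>U. {..m}) else {})"
  have "finite Q" unfolding Q_def by (auto intro!: finite_lower_monos)
  moreover have "sigma n v F mu U = (\<Sum>q\<in>Q. F (fst q) (snd q) * sigma n v (basis (fst q) (snd q)) mu U)" for F
  proof -
    let ?g = "\<lambda>(\<alpha>, S). if finite S then F \<alpha> S * wedge (mono \<alpha>) (wedge_list (map (sigma1 n v) (desc_list S))) mu U else 0"
    have "{q. ?g q \<noteq> 0} \<subseteq> Q"
    proof
      fix q assume "q \<in> {q. ?g q \<noteq> 0}"
      then obtain \<alpha> S where q: "q = (\<alpha>, S)" and "finite S"
        and nz: "wedge (mono \<alpha>) (wedge_list (map (sigma1 n v) (desc_list S))) mu U \<noteq> 0"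
        by (cases q) (auto split: if_splits)
      then show "q \<in> Q" using sigma_term_nonzeroD[OF nz] by (simp add: Q_def)
    qed
    then have "sigma n v F mu U = sum ?g Q"
      unfolding sigma_def desc_list_def[symmetric] by (rule Sum_any.expand_superset[OF \<open>finite Q\<close>])
    then show ?thesis
      by (simp add: sigma_basis split_def) (intro sum.cong refl, auto)
  qed
  ultimately show "\<exists>Q. finite Q \<and> (\<forall>F. sigma n v F mu U = (\<Sum>q\<in>Q. F (fst q) (snd q) * sigma n v (basis (fst q) (snd q)) mu U))"
    by blast
qed

lemma sigma_zero[simp]: "sigma n v 0 = 0" by (rule flinear_zero[OF flinear_sigma])

lemma sigma_diff: "sigma n v (A - B) = sigma n v A - sigma n v B" by (rule flinear_diff[OF flinear_sigma])

lemma is_vector_sigma1: "is_vector (sigma1 n v k)"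
  by (auto simp: is_vector_def sigma1_def)

lemma sigma_wedge_basis: "sigma n v (wedge (basis a S) (basis b T)) = wedge (sigma n v (basis a S)) (sigma n v (basis b T))"
proof (cases "finite S \<and> finite T")
  case True
  then have "wedge (sigma n v (basis a S)) (sigma n v (basis b T))
      = wedge (mono (a + b)) (wedge_list (map (sigma1 n v) (desc_list S @ desc_list T)))"
    by (simp add: sigma_basis wedge_mono_wedge_mono wedge_list_append)
  moreover have "wedge_list (map (sigma1 n v) (desc_list S @ desc_list T)) = (if S \<inter> T = {}
      then scale (wsign S T) (wedge_list (map (sigma1 n v) (desc_list (S \<union> T)))) else 0)"
  proof (cases "S \<inter> T = {}")
    case False
    then have "\<not> distinct (map (sigma1 n v) (desc_list S @ desc_list T))"
      using True by (auto simp: set_desc_list distinct_map)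
    then have "wedge_list (map (sigma1 n v) (desc_list S @ desc_list T)) = 0"
      using is_vector_sigma1 by (intro wedge_list_not_distinct) auto
    then show ?thesis using False by simp
  qed (use True wedge_list_desc_merge[OF is_vector_sigma1] in simp)
  ultimately show ?thesis
    using True sigma_basis[of n v "a + b" "S \<union> T"]
    by (simp add: wedge_basis_basis flinear_scale[OF flinear_sigma] wedge_scale_right)
qed (auto simp: wedge_basis_basis sigma_basis)

lemma sigma_wedge: "sigma n v (wedge A B) = wedge (sigma n v A) (sigma n v B)"
proof -
  have basis_left: "sigma n v (wedge (basis a S) B) = wedge (sigma n v (basis a S)) (sigma n v B)" for a S
    by (rule flinear_eqI[where L="\<lambda>B. sigma n v (wedge (basis a S) B)" and M="\<lambda>B. wedge (sigma n v (basis a S)) (sigma n v B)",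
          OF flinear_comp[OF flinear_sigma flinear_wedge_right] flinear_comp[OF flinear_wedge_right flinear_sigma] sigma_wedge_basis])
  show ?thesis
    by (rule flinear_eqI[where L="\<lambda>A. sigma n v (wedge A B)" and M="\<lambda>A. wedge (sigma n v A) (sigma n v B)",
          OF flinear_comp[OF flinear_sigma flinear_wedge_left] flinear_comp[OF flinear_wedge_left flinear_sigma] basis_left])
qed

lemma fin_sets_mono: "fin_sets (mono a)" by (simp add: fin_sets_def mono_def)

lemma fin_sets_sigma1: "fin_sets (sigma1 n v k)" by (rule fin_sets_vector[OF is_vector_sigma1])

lemma sigma_mono: "sigma n v (mono a) = mono a"
  using sigma_basis[of n v a "{}"] by (simp add: mono_eq_basis[symmetric] wedge_wunit_right fin_sets_mono)

lemma sigma_wunit: "sigma n v wunit = wunit"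
  using sigma_mono[of n v 0] by (simp add: mono_zero)

lemma sigma_var: "sigma n v (var t) = var t" by (simp add: var_eq_mono sigma_mono)

lemma sigma_wedge_list: "sigma n v (wedge_list xs) = wedge_list (map (sigma n v) xs)"
  by (induction xs) (simp_all add: sigma_wunit sigma_wedge)

lemma sigma_basis_singleton: "sigma n a (basis \<beta> {m}) = wedge (mono \<beta>) (sigma1 n a m)"
  by (simp add: sigma_basis desc_list_singleton wedge_wunit_right fin_sets_sigma1)

lemma gen_eq_basis: "gen n k = (if enat k < n then basis 0 {k} else 0)"
  by (auto simp: gen_def basis_def fun_eq_iff)

lemma sigma1_out_of_range: "\<not> enat k < n \<Longrightarrow> sigma1 n v k = 0"
proof (intro ext)
  fix mu U assume "\<not> enat k < n"
  then show "sigma1 n v k mu U = 0 mu U"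
    by (auto simp: sigma1_def) (meson enat_ord_simps(1) le_less_trans)
qed

lemma sigma_gen: "sigma n v (gen n k) = sigma1 n v k"
proof (cases "enat k < n")
  case True
  then show ?thesis by (simp add: gen_eq_basis sigma_basis_singleton mono_zero wedge_wunit_left fin_sets_sigma1)
next
  case False
  then show ?thesis by (simp add: gen_eq_basis sigma1_out_of_range)
qed

lemma wedge_mono_apply: "wedge (mono \<beta>) G mu U = (if finite U \<and> \<beta> \<in> lower_monos mu then G (mu - \<beta>) U else 0)"
  by (simp add: mono_eq_basis wedge_basis_left)

lemma wedge_var_apply: "wedge (var t) G mu U = (if finite U \<and> Poly_Mapping.single t 1 \<in> lower_monos mu then G (mu - Poly_Mapping.single t 1) U else 0)"
  by (simp add: var_eq_mono wedge_mono_apply)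

lemma sigma1_shift_diff: "shift_diff (var t) (sigma1 n t) = gen n"
proof (intro ext)
  fix k mu U
  let ?e = "Poly_Mapping.single t (1::nat)"
  show "shift_diff (var t) (sigma1 n t) k mu U = gen n k mu U"
  proof (cases "\<exists>m. U = {m} \<and> k < m")
    case True
    then obtain m where U: "U = {m}" and "k < m" by blast
    then have "?e + Poly_Mapping.single t (m - Suc k) = Poly_Mapping.single t (m - k)"
      by (simp add: Suc_diff_Suc flip: single_add)
    then have "(?e \<in> lower_monos mu \<and> mu - ?e = Poly_Mapping.single t (m - Suc k)) \<longleftrightarrow> mu = Poly_Mapping.single t (m - k)"
      using lower_monos_diff_iff by metis
    then show ?thesis using \<open>k < m\<close> by (auto simp: U shift_diff_def wedge_var_apply sigma1_def gen_def)
  next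
    case False
    then show ?thesis by (auto simp: shift_diff_def wedge_var_apply sigma1_def gen_def)
  qed
qed

text \<open>sigma_a sigma_b X^w = sum over w \<le> m \<le> M of x_b^(m-w) x_a^(M-m) X^M, which is symmetric in a, b
  under m \<mapsto> w + M - m.\<close>

definition two_var_coeff :: "nat \<Rightarrow> nat \<Rightarrow> nat \<Rightarrow> nat \<Rightarrow> (nat \<Rightarrow>\<^sub>0 nat) \<Rightarrow> rat" where
  "two_var_coeff a b w M mu = (\<Sum>m\<in>{w..M}. if mu = Poly_Mapping.single b (m - w) + Poly_Mapping.single a (M - m) then 1 else 0)"

lemma two_var_coeff_commute: "two_var_coeff a b w M mu = two_var_coeff b a w M mu"
  unfolding two_var_coeff_def
  by (rule sum.reindex_bij_witness[where i="\<lambda>m. w + M - m" and j="\<lambda>m. w + M - m"])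
     (auto simp: add.commute)

lemma sigma_basis_singleton_apply: "sigma n a (basis \<beta> {m}) mu U =
   (if \<exists>M. U = {M} \<and> enat M < n \<and> m \<le> M \<and> mu = \<beta> + Poly_Mapping.single a (M - m) then 1 else 0)"
proof -
  have "sigma n a (basis \<beta> {m}) mu U = (if finite U \<and> \<beta> \<in> lower_monos mu then sigma1 n a m (mu - \<beta>) U else 0)"
    by (simp add: sigma_basis_singleton wedge_mono_apply)
  also have "\<dots> = (if \<exists>M. U = {M} \<and> enat M < n \<and> m \<le> M \<and> mu = \<beta> + Poly_Mapping.single a (M - m) then 1 else 0)"
    using lower_monos_diff_iff[of \<beta> mu] by (auto simp: sigma1_def)
  finally show ?thesis .
qed

lemma sigma_sigma1_apply_non_singleton:
  assumes "\<not> (\<exists>M. U = {M} \<and> enat M < n)"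
  shows "sigma n a (sigma1 n b w) mu U = 0"
proof -
  obtain Q where "finite Q"
    and Q: "\<And>F. sigma n a F mu U = (\<Sum>q\<in>Q. F (fst q) (snd q) * sigma n a (basis (fst q) (snd q)) mu U)"
    using flinear_expand[OF flinear_sigma] by blast
  have term_zero: "sigma1 n b w (fst q) (snd q) * sigma n a (basis (fst q) (snd q)) mu U = 0" for q
  proof (cases "sigma1 n b w (fst q) (snd q) = 0")
    case False
    then obtain m where "snd q = {m}" using sigma1_nonzeroD by blast
    then show ?thesis using assms by (auto simp: sigma_basis_singleton_apply)
  qed simp
  show ?thesis unfolding Q[of "sigma1 n b w"] term_zero by simp
qed

lemma sigma_sigma1_term_nonzeroD:
  assumes "sigma1 n b w (fst q) (snd q) * sigma n a (basis (fst q) (snd q)) mu {M} \<noteq> 0"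
  shows "q \<in> (\<lambda>m. (Poly_Mapping.single b (m - w), {m})) ` {w..M}"
proof -
  obtain m where m: "snd q = {m}" "w \<le> m" "fst q = Poly_Mapping.single b (m - w)"
    using sigma1_nonzeroD[of n b w "fst q" "snd q"] assms by auto
  then have "m \<le> M"
    using assms by (auto simp: sigma_basis_singleton_apply split: if_splits)
  then show ?thesis using m by (auto intro!: image_eqI[of _ _ m] simp: prod_eq_iff)
qed

lemma sigma_sigma1_apply_singleton:
  assumes M: "enat M < n"
  shows "sigma n a (sigma1 n b w) mu {M} = two_var_coeff a b w M mu"
proof -
  define h where "h = (\<lambda>m. (Poly_Mapping.single b (m - w), {m::nat}))"
  let ?g = "\<lambda>q. sigma1 n b w (fst q) (snd q) * sigma n a (basis (fst q) (snd q)) mu {M}"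
  obtain Q where "finite Q" and Q: "\<And>Q' F. finite Q' \<Longrightarrow> Q \<subseteq> Q' \<Longrightarrow>
     sigma n a F mu {M} = (\<Sum>q\<in>Q'. F (fst q) (snd q) * sigma n a (basis (fst q) (snd q)) mu {M})"
    by (rule flinear_expand_superset[OF flinear_sigma, where mu=mu and U="{M}"]) blast
  have "sigma n a (sigma1 n b w) mu {M} = sum ?g (Q \<union> h ` {w..M})"
    using Q[of "Q \<union> h ` {w..M}" "sigma1 n b w"] \<open>finite Q\<close> by simp
  also have "\<dots> = sum ?g (h ` {w..M})"
    using \<open>finite Q\<close> sigma_sigma1_term_nonzeroD[of n b w _ a mu M] unfolding h_def
    by (intro sum.mono_neutral_right) auto
  also have "\<dots> = sum (?g \<circ> h) {w..M}"
    by (rule sum.reindex) (auto simp: h_def inj_on_def)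
  also have "\<dots> = two_var_coeff a b w M mu"
    unfolding two_var_coeff_def
  proof (intro sum.cong refl)
    fix m assume m: "m \<in> {w..M}"
    then have "sigma1 n b w (Poly_Mapping.single b (m - w)) {m} = 1"
      using M by (auto simp: sigma1_def intro: le_less_trans[of _ "enat M"])
    then show "(?g \<circ> h) m = (if mu = Poly_Mapping.single b (m - w) + Poly_Mapping.single a (M - m) then 1 else 0)"
      using m M by (auto simp: h_def sigma_basis_singleton_apply)
  qed
  finally show ?thesis .
qed

lemma sigma_sigma1_commute: "sigma n a (sigma1 n b w) = sigma n b (sigma1 n a w)"
proof (intro ext)
  fix mu U
  show "sigma n a (sigma1 n b w) mu U = sigma n b (sigma1 n a w) mu U"
  proof (cases "\<exists>M. U = {M} \<and> enat M < n")
    case True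
    then obtain M where "U = {M}" "enat M < n" by blast
    then show ?thesis by (simp add: sigma_sigma1_apply_singleton two_var_coeff_commute)
  next
    case False
    then show ?thesis by (simp add: sigma_sigma1_apply_non_singleton)
  qed
qed

lemma sigma_commute: "sigma n a (sigma n b F) = sigma n b (sigma n a F)"
proof -
  have on_basis: "sigma n a (sigma n b (basis c W)) = sigma n b (sigma n a (basis c W))" for c W
    by (simp add: sigma_basis sigma_wedge sigma_mono sigma_wedge_list sigma_sigma1_commute o_def)
  show ?thesis
    by (rule flinear_eqI[where L="\<lambda>F. sigma n a (sigma n b F)" and M="\<lambda>F. sigma n b (sigma n a F)",
          OF flinear_comp[OF flinear_sigma flinear_sigma] flinear_comp[OF flinear_sigma flinear_sigma] on_basis])
qed

lemma sigma_vector_part: "sigma n v (vector_part F) = vector_part (sigma n v (vector_part F))"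
proof -
  have on_basis: "sigma n v (vector_part (basis a S)) = vector_part (sigma n v (vector_part (basis a S)))" for a S
  proof (cases "card S = 1")
    case True
    then obtain s where S: "S = {s}" by (auto simp: card_Suc_eq)
    have d: "is_vector (wedge (mono a) (sigma1 n v s))" by (rule is_vector_wedge_scalar[OF is_scalar_mono is_vector_sigma1])
    have "vector_part (basis a S) = basis a {s}" using S by (simp add: vector_part_basis)
    then show ?thesis using vector_part_eq[OF d] by (simp add: sigma_basis_singleton)
  next
    case False
    then have "vector_part (basis a S) = 0" by (simp add: vector_part_basis)
    then show ?thesis using flinear_zero[OF flinear_vector_part] by simp
  qed
  show ?thesis
    by (rule flinear_eqI[where L="\<lambda>F. sigma n v (vector_part F)" and M="\<lambda>F. vector_part (sigma n v (vector_part F))",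
          OF flinear_comp[OF flinear_sigma flinear_vector_part] flinear_comp[OF flinear_vector_part flinear_comp[OF flinear_sigma flinear_vector_part]] on_basis])
qed

lemma is_vector_vector_part: "is_vector (vector_part X)" by (simp add: is_vector_def vector_part_def)

lemma is_vector_sigma: "is_vector F \<Longrightarrow> is_vector (sigma n v F)"
  using sigma_vector_part[of n v F] vector_part_eq[of F] is_vector_vector_part[of "sigma n v (vector_part F)"] by simp

lemma is_vector_gen: "is_vector (gen n k)" by (simp add: is_vector_def gen_def)

lemma sigmas_Nil[simp]: "sigmas n [] F = F" by (simp add: sigmas_def)

lemma sigmas_Cons[simp]: "sigmas n (v # vs) F = sigma n v (sigmas n vs F)" by (simp add: sigmas_def)

lemma sigmas_append: "sigmas n (xs @ ys) F = sigmas n xs (sigmas n ys F)" by (simp add: sigmas_def)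

lemma sigmas_wedge: "sigmas n vs (wedge A B) = wedge (sigmas n vs A) (sigmas n vs B)"
  by (induction vs) (simp_all add: sigma_wedge)

lemma sigmas_diff: "sigmas n vs (A - B) = sigmas n vs A - sigmas n vs B"
  by (induction vs) (simp_all add: sigma_diff)

lemma sigmas_var: "sigmas n vs (var t) = var t"
  by (induction vs) (simp_all add: sigma_var)

lemma sigmas_wunit: "sigmas n vs wunit = wunit"
  by (induction vs) (simp_all add: sigma_wunit)

lemma sigmas_wedge_list: "sigmas n vs (wedge_list xs) = wedge_list (map (sigmas n vs) xs)"
  by (induction xs) (simp_all add: sigmas_wunit sigmas_wedge)

lemma sigmas_Xvac: "sigmas n vs (Xvac n k) = wedge_list (map (\<lambda>i. sigmas n vs (gen n i)) (rev [0..<k]))"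
  by (simp add: Xvac_def sigmas_wedge_list o_def)

lemma sigma_sigmas_commute: "sigma n a (sigmas n vs F) = sigmas n vs (sigma n a F)"
  by (induction vs) (simp_all add: sigma_commute)

lemma sigmas_commute: "sigmas n xs (sigmas n ys F) = sigmas n ys (sigmas n xs F)"
  by (induction xs) (simp_all add: sigma_sigmas_commute)

lemma is_vector_sigmas_gen: "is_vector (sigmas n vs (gen n k))"
  by (induction vs) (simp_all add: is_vector_gen is_vector_sigma)

lemma shift_diffs_sigmas_map:
  "shift_diffs (map var ws) (\<lambda>k. sigmas n vs (u k)) = (\<lambda>k. sigmas n vs (shift_diffs (map var ws) u k))"
  by (rule shift_diffs_map) (auto simp: sigmas_diff sigmas_wedge sigmas_var)

text \<open>The difference operators undo the shifts: this is the identity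
  sigma_+(t) X^k - t sigma_+(t) X^(k+1) = X^k, one variable at a time.\<close>

lemma shift_diffs_sigmas_gen: "shift_diffs (map var vs) (\<lambda>k. sigmas n vs (gen n k)) = gen n"
proof (induction vs)
  case Nil then show ?case by (simp add: fun_eq_iff)
next
  case (Cons t vs)
  have "shift_diffs (map var vs) (\<lambda>k. sigmas n [t] (sigmas n vs (gen n k)))
      = (\<lambda>k. sigmas n [t] (shift_diffs (map var vs) (\<lambda>k. sigmas n vs (gen n k)) k))"
    by (rule shift_diffs_sigmas_map)
  also have "\<dots> = sigma1 n t"
    by (simp add: Cons.IH sigma_gen)
  finally show ?case by (simp add: shift_diffs_Cons sigma1_shift_diff)
qed

lemma shift_diffs_sigmas_append:
  "shift_diffs (map var ws) (\<lambda>k. sigmas n (vs @ ws) (gen n k)) = (\<lambda>k. sigmas n vs (gen n k))"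
proof -
  have "shift_diffs (map var ws) (\<lambda>k. sigmas n vs (sigmas n ws (gen n k)))
      = (\<lambda>k. sigmas n vs (shift_diffs (map var ws) (\<lambda>k. sigmas n ws (gen n k)) k))"
    by (rule shift_diffs_sigmas_map)
  then show ?thesis by (simp add: sigmas_append shift_diffs_sigmas_gen)
qed

theorem mainTheorem10:
  fixes n :: enat and h r :: nat
  assumes "n \<ge> 1" and "h \<ge> 1" and "r \<ge> 1" and "enat (h + r) \<le> n"
  shows "wedge (sigmas n [0..<h] (Xvac n h)) (sigmas n [h..<h + r] (Xvac n r))
       = wedge (wedge_list [ssub (var i) (var (h + j)). i \<leftarrow> [0..<h], j \<leftarrow> [0..<r]])
               (sigmas n [0..<h + r] (Xvac n (h + r)))"
proof -
  let ?z = "[0..<h]" and ?t = "[h..<h + r]"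
  define u where "u = (\<lambda>k. sigmas n (?z @ ?t) (gen n k))"
  have "u = (\<lambda>k. sigmas n (?t @ ?z) (gen n k))"
    unfolding u_def sigmas_append by (rule ext) (rule sigmas_commute)
  then have "shift_diffs (map var ?z) u = (\<lambda>k. sigmas n ?t (gen n k))"
    by (simp only: shift_diffs_sigmas_append)
  moreover have "shift_diffs (map var ?t) u = (\<lambda>k. sigmas n ?z (gen n k))"
    unfolding u_def by (rule shift_diffs_sigmas_append)
  moreover have "\<forall>k. is_vector (u k)" by (simp add: u_def is_vector_sigmas_gen)
  ultimately have "wedge (sigmas n ?z (Xvac n h)) (sigmas n ?t (Xvac n r))
      = wedge (wedge_list (concat (map (\<lambda>z. map (ssub z) (map var ?t)) (map var ?z))))
              (wedge_list (map u (rev [0..<h + r])))"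
    using wedge_shift_diffs[of u "map var ?z" "map var ?t"]
    by (simp add: sigmas_Xvac wedge_list_append is_scalar_var)
  moreover have "map var ?t = map (\<lambda>j. var (h + j)) [0..<r]" by (induction r) simp_all
  ultimately show ?thesis
    by (simp add: u_def sigmas_Xvac map_concat comp_def upt_add_eq_append[of 0 h])
qed

end
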